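(* Let $n \geq 1$. There exist $6n+3$ products $P_1,\dots,P_{6n+3}$, each of the form $P_t = L_t M_t$ where $L_t$ and $M_t$ are $\mathbb{Z}$-linear combinations of the $3n+9$ indeterminates $a_{ij}$ ($1\le i\le n$, $1\le j\le 3$) and $b_{jk}$ ($1\le j,k\le 3$), such that for every $1\le i\le n$ and $1\le k\le 3$ the polynomial $\sum_{j=1}^3 a_{ij}b_{jk}$ is a $\mathbb{Z}$-linear combination of $P_1,\dots,P_{6n+3}$ in the commutative polynomial ring $\mathbb{Z}[a_{ij}, b_{jk}]$. Consequently, for every commutative ring $R$, every $n\times 3$ matrix $A=(a_{ij})$ over $R$ and every $3\times 3$ matrix $B=(b_{jk})$ over $R$, the product $AB$ can be computed using $6n+3$ multiplications.
   Context: "The product can be computed using $k$ multiplications" means: there are $k$ products, each a product of two linear forms with integer coefficients in the entries of $A$ and $B$ (the two factors may each involve entries of both $A$ and $B$; commutativity of $R$ may be used), such that every entry of $AB$ is an integer linear combination of these $k$ products, identically for all inputs. Additions, subtractions and multiplications by integer constants are not counted. *)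

theory Defs
  imports Main "HOL-Library.Poly_Mapping"
begin

datatype var = MA nat nat | MB nat nat

text \<open>The commutative polynomial ring Z[a_ij, b_jk]: integer-valued finitely supported
  functions on monomials, monomials being finitely supported exponent vectors.\<close>
type_synonym zpoly = "(var \<Rightarrow>\<^sub>0 nat) \<Rightarrow>\<^sub>0 int"

definition Xv :: "var \<Rightarrow> zpoly" where
  "Xv v = Poly_Mapping.single (Poly_Mapping.single v 1) 1"

definition vars :: "nat \<Rightarrow> var set" where
  "vars n = {MA i j | i j. i \<in> {1..n} \<and> j \<in> {1..3}} \<union> {MB j k | j k. j \<in> {1..3} \<and> k \<in> {1..3}}"

definition linform :: "nat \<Rightarrow> (var \<Rightarrow> int) \<Rightarrow> zpoly" where
  "linform n c = (\<Sum>v\<in>vars n. of_int (c v) * Xv v)"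

definition linform_eval :: "nat \<Rightarrow> (var \<Rightarrow> int) \<Rightarrow> (nat \<Rightarrow> nat \<Rightarrow> 'r::comm_ring_1)
    \<Rightarrow> (nat \<Rightarrow> nat \<Rightarrow> 'r) \<Rightarrow> 'r" where
  "linform_eval n c a b =
     (\<Sum>v\<in>vars n. of_int (c v) * (case v of MA i j \<Rightarrow> a i j | MB j k \<Rightarrow> b j k))"

end

theory Submission
  imports Defs "HOL-Library.Function_Algebras"
begin

text \<open>A row (x1, x2, x3) of A is multiplied by B with six products of its own,
  P0 = (x1 - b22)(x2 - b13), P1 = (x2 - b33)(x3 - b21), P2 = (x3 - b11)(x1 - b32),
  P3 = (x1 + x2 + b31 - b32 - b33) x3, P4 = (x2 + x3 + b12 - b11 - b13) x1,
  P5 = (x3 + x1 + b23 - b21 - b22) x2,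
  and three products G0 = b21 b33, G1 = b11 b32, G2 = b22 b13 of entries of B alone, which all rows
  share.  In P3 - P1 - P2 the products x_j x_l cancel and what remains is the first entry of the row
  up to -G0 - G1; the other two entries arise the same way after cyclically shifting the indices.
  The identities hold in every commutative ring, hence both for the polynomials and for every
  concrete input.\<close>

definition lin_eval :: "nat \<Rightarrow> (var \<Rightarrow> int) \<Rightarrow> (var \<Rightarrow> 'r::comm_ring_1) \<Rightarrow> 'r" where
  "lin_eval n c x = (\<Sum>v\<in>vars n. of_int (c v) * x v)"

definition matrix_assignment :: "(nat \<Rightarrow> nat \<Rightarrow> 'r) \<Rightarrow> (nat \<Rightarrow> nat \<Rightarrow> 'r) \<Rightarrow> var \<Rightarrow> 'r" where
  "matrix_assignment a b v = (case v of MA i j \<Rightarrow> a i j | MB j k \<Rightarrow> b j k)"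

lemma linform_eq_lin_eval: "linform n c = lin_eval n c Xv"
  by (simp add: linform_def lin_eval_def)

lemma linform_eval_eq_lin_eval: "linform_eval n c a b = lin_eval n c (matrix_assignment a b)"
  by (simp add: linform_eval_def lin_eval_def matrix_assignment_def)

lemma lin_eval_add: "lin_eval n (c + d) x = lin_eval n c x + lin_eval n d x"
  by (simp add: lin_eval_def sum.distrib distrib_right)

lemma lin_eval_diff: "lin_eval n (c - d) x = lin_eval n c x - lin_eval n d x"
  by (simp add: lin_eval_def sum_subtractf left_diff_distrib)

lemma finite_vars: "finite (vars n)"
proof -
  have "vars n \<subseteq> case_prod MA ` ({1..n} \<times> {1..3}) \<union> case_prod MB ` ({1..3} \<times> {1..3})"
    by (auto simp: vars_def)
  then show ?thesis
    by (rule finite_subset) auto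
qed

definition coord :: "var \<Rightarrow> var \<Rightarrow> int" where
  "coord v = (\<lambda>w. if w = v then 1 else 0)"

lemma lin_eval_coord:
  assumes "v \<in> vars n"
  shows "lin_eval n (coord v) x = x v"
proof -
  have "lin_eval n (coord v) x = (\<Sum>w\<in>vars n. if w = v then x w else 0)"
    unfolding lin_eval_def coord_def by (rule sum.cong) auto
  also have "(\<Sum>w\<in>vars n. if w = v then x w else 0) = x v"
    using assms finite_vars by (simp add: sum.delta')
  finally show ?thesis .
qed

abbreviation xa :: "nat \<Rightarrow> nat \<Rightarrow> var \<Rightarrow> int" where "xa i j \<equiv> coord (MA i j)"
abbreviation xb :: "nat \<Rightarrow> nat \<Rightarrow> var \<Rightarrow> int" where "xb j k \<equiv> coord (MB j k)"

definition row_left :: "nat \<Rightarrow> (var \<Rightarrow> int) list" where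
  "row_left i =
     [xa i 1 - xb 2 2, xa i 2 - xb 3 3, xa i 3 - xb 1 1,
      xa i 1 + xa i 2 + xb 3 1 - xb 3 2 - xb 3 3,
      xa i 2 + xa i 3 + xb 1 2 - xb 1 1 - xb 1 3,
      xa i 3 + xa i 1 + xb 2 3 - xb 2 1 - xb 2 2]"

definition row_right :: "nat \<Rightarrow> (var \<Rightarrow> int) list" where
  "row_right i = [xa i 2 - xb 1 3, xa i 3 - xb 2 1, xa i 1 - xb 3 2, xa i 3, xa i 1, xa i 2]"

definition shared_left :: "(var \<Rightarrow> int) list" where
  "shared_left = [xb 2 1, xb 1 1, xb 2 2]"

definition shared_right :: "(var \<Rightarrow> int) list" where
  "shared_right = [xb 3 3, xb 3 2, xb 1 3]"

definition row_coeff :: "nat \<Rightarrow> int list" where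
  "row_coeff k = [[0, -1, -1, 1, 0, 0], [-1, 0, -1, 0, 1, 0], [-1, -1, 0, 0, 0, 1]] ! (k - 1)"

definition shared_coeff :: "nat \<Rightarrow> int list" where
  "shared_coeff k = [[1, 1, 0], [0, 1, 1], [1, 0, 1]] ! (k - 1)"

definition row_part :: "nat \<Rightarrow> nat \<Rightarrow> nat \<Rightarrow> (var \<Rightarrow> 'r::comm_ring_1) \<Rightarrow> 'r" where
  "row_part n i k x =
     (\<Sum>m<6. of_int (row_coeff k ! m) * (lin_eval n (row_left i ! m) x * lin_eval n (row_right i ! m) x))"

definition shared_part :: "nat \<Rightarrow> nat \<Rightarrow> (var \<Rightarrow> 'r::comm_ring_1) \<Rightarrow> 'r" where
  "shared_part n k x =
     (\<Sum>g<3. of_int (shared_coeff k ! g) * (lin_eval n (shared_left ! g) x * lin_eval n (shared_right ! g) x))"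

lemma row_identity:
  fixes x :: "var \<Rightarrow> 'r::comm_ring_1"
  assumes i: "i \<in> {1..n}" and k: "k \<in> {1..3}"
  shows "(\<Sum>j=1..3. x (MA i j) * x (MB j k))
    = row_part n i k x + shared_part n k x"
proof -
  have a: "lin_eval n (xa i j) x = x (MA i j)" if "j \<in> {1..3}" for j
    using i that by (intro lin_eval_coord) (auto simp: vars_def)
  have b: "lin_eval n (xb j l) x = x (MB j l)" if "j \<in> {1..3}" "l \<in> {1..3}" for j l
    using that by (intro lin_eval_coord) (auto simp: vars_def)
  from k consider "k = 1" | "k = 2" | "k = 3"
    by fastforce
  then show ?thesis
    by cases (simp_all add: row_part_def shared_part_def row_left_def row_right_def
        shared_left_def shared_right_def row_coeff_def shared_coeff_def lin_eval_add lin_eval_diff a b numeral_eq_Suc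
        lessThan_Suc atLeastAtMostSuc_conv algebra_simps)
qed

lemma sum_lessThan_blocks:
  fixes q n p :: nat
  shows "(\<Sum>t<q*n+p. f t) = (\<Sum>r<n. \<Sum>m<q. f (q*r+m)) + (\<Sum>g<p. f (q*n+g))"
proof -
  have "{..<q*n+p} = {..<q*n} \<union> {q*n..<q*n+p}"
    by auto
  then have "(\<Sum>t<q*n+p. f t) = (\<Sum>t<q*n. f t) + (\<Sum>t\<in>{q*n..<q*n+p}. f t)"
    by (simp add: sum.union_disjoint ivl_disj_int)
  also have "(\<Sum>t<q*n. f t) = (\<Sum>r<n. \<Sum>t\<in>{r*q..<r*q+q}. f t)"
    by (simp add: sum.nat_group mult.commute)
  finally show ?thesis
    by (simp add: sum.atLeastLessThan_shift_0[where m = "_ * _"] atLeast0LessThan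
        comp_def mult.commute)
qed

definition scheme_left :: "nat \<Rightarrow> nat \<Rightarrow> var \<Rightarrow> int" where
  "scheme_left n t =
     (if t < 6*n then row_left (t div 6 + 1) ! (t mod 6) else shared_left ! (t - 6*n))"

definition scheme_right :: "nat \<Rightarrow> nat \<Rightarrow> var \<Rightarrow> int" where
  "scheme_right n t =
     (if t < 6*n then row_right (t div 6 + 1) ! (t mod 6) else shared_right ! (t - 6*n))"

definition scheme_coeff :: "nat \<Rightarrow> nat \<Rightarrow> nat \<Rightarrow> nat \<Rightarrow> int" where
  "scheme_coeff n i k t =
     (if t < 6*n then (if t div 6 + 1 = i then row_coeff k ! (t mod 6) else 0)
      else shared_coeff k ! (t - 6*n))"

lemma scheme_identity:
  fixes x :: "var \<Rightarrow> 'r::comm_ring_1"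
  assumes i: "i \<in> {1..n}" and k: "k \<in> {1..3}"
  shows "(\<Sum>j=1..3. x (MA i j) * x (MB j k))
    = (\<Sum>t<6*n+3. of_int (scheme_coeff n i k t)
          * (lin_eval n (scheme_left n t) x * lin_eval n (scheme_right n t) x))"
    (is "_ = (\<Sum>t<6*n+3. ?P t)")
proof -
  have row_block: "(\<Sum>m<6. ?P (6*r+m)) = (if r = i - 1 then row_part n i k x else 0)"
    if "r < n" for r
  proof -
    have "r + 1 = i \<longleftrightarrow> r = i - 1"
      using i by auto
    with that show ?thesis
      by (auto intro!: sum.cong simp: row_part_def scheme_coeff_def scheme_left_def scheme_right_def)
  qed
  have "(\<Sum>t<6*n+3. ?P t) = (\<Sum>r<n. \<Sum>m<6. ?P (6*r+m)) + (\<Sum>g<3. ?P (6*n+g))"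
    by (rule sum_lessThan_blocks)
  also have "(\<Sum>r<n. \<Sum>m<6. ?P (6*r+m)) = row_part n i k x"
    using i by (auto simp: row_block sum.delta')
  also have "(\<Sum>g<3. ?P (6*n+g)) = shared_part n k x"
    by (simp add: shared_part_def scheme_coeff_def scheme_left_def scheme_right_def)
  finally show ?thesis
    using row_identity[OF i k] by simp
qed

theorem mainTheorem1:
  fixes n :: nat
  assumes "n \<ge> 1"
  shows "\<exists>(L :: nat \<Rightarrow> var \<Rightarrow> int) (M :: nat \<Rightarrow> var \<Rightarrow> int) (c :: nat \<Rightarrow> nat \<Rightarrow> nat \<Rightarrow> int).
     (\<forall>i\<in>{1..n}. \<forall>k\<in>{1..3}.
        (\<Sum>j=1..3. Xv (MA i j) * Xv (MB j k))
          = (\<Sum>t<6*n+3. of_int (c i k t) * (linform n (L t) * linform n (M t))))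
   \<and> (\<forall>(a :: nat \<Rightarrow> nat \<Rightarrow> 'r::comm_ring_1) b. \<forall>i\<in>{1..n}. \<forall>k\<in>{1..3}.
        (\<Sum>j=1..3. a i j * b j k)
          = (\<Sum>t<6*n+3. of_int (c i k t) * (linform_eval n (L t) a b * linform_eval n (M t) a b)))"
proof (intro exI conjI ballI allI)
  fix i k :: nat
  assume "i \<in> {1..n}" "k \<in> {1..3}"
  from scheme_identity[OF this, of Xv]
  show "(\<Sum>j=1..3. Xv (MA i j) * Xv (MB j k))
      = (\<Sum>t<6*n+3. of_int (scheme_coeff n i k t)
          * (linform n (scheme_left n t) * linform n (scheme_right n t)))"
    by (simp add: linform_eq_lin_eval)
next
  fix a b :: "nat \<Rightarrow> nat \<Rightarrow> 'r::comm_ring_1" and i k :: nat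
  assume "i \<in> {1..n}" "k \<in> {1..3}"
  from scheme_identity[OF this, of "matrix_assignment a b"]
  show "(\<Sum>j=1..3. a i j * b j k)
      = (\<Sum>t<6*n+3. of_int (scheme_coeff n i k t)
          * (linform_eval n (scheme_left n t) a b * linform_eval n (scheme_right n t) a b))"
    by (simp add: linform_eval_eq_lin_eval matrix_assignment_def)
qed

end
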